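(* Let $\alpha\ge1$. If all valuation functions are symmetric submodular and every item cost function $c_j$ is non-decreasing and $\alpha$-average-decreasing, then IACSM is $\alpha$-budget-balanced: its output $(A,p)$ satisfies $\sum_{j\in M}c_j(T_j)\le\sum_{i\in N}p_i\le\alpha\sum_{j\in M}c_j(T_j)$, where $T_j=\{i: j\in A_i\}$.
   Context: Players $N=\{1,\dots,n\}$, items $M=\{1,\dots,m\}$, non-decreasing valuations $v_i:2^M\to\mathbb{R}_{\ge0}$; symmetric: $f(S)=f(T)$ whenever $|S|=|T|$; submodular: $f(S\cup\{x\})-f(S)\ge f(T\cup\{x\})-f(T)$ for $S\subseteq T$, $x\notin T$. A cost function $c:2^N\to\mathbb{R}_{\ge0}$ is $\alpha$-average-decreasing if $\alpha\frac{c(S)}{|S|}\ge\frac{c(T)}{|T|}$ for all nonempty $S\subseteq T\subseteq N$. Mechanism IACSM (input: declared valuations $b$): maintain active set $X=N$, sets $T_j=N$ and cost shares $\chi_j=c_j(N)/n$ for all items $j$. While $X\neq\emptyset$: (1) every $i\in X$ computes $A_i\in\arg\max_{S\subseteq M}\{b_i(S)-\sum_{j\in S}\chi_j\}$, choosing among maximizers one of maximum cardinality $k$, and among those the $k$ items with smallest current $\chi_j$ (item ties by index); (2) choose $i^*\in X$ with $|A_{i^*}|$ minimum (ties by smallest index); (3) assign $A_{i^*}$ to $i^*$ permanently and remove $i^*$ from $X$; (4) for every item $j\notin A_{i^*}$ set $T_j:=T_j\setminus\{i^*\}$ and, if $T_j\ne\emptyset$, set $\chi_j:=\max\{\chi_j,c_j(T_j)/|T_j|\}$.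 Output the assigned bundles and payments $p_i=\sum_{j\in A_i}\chi_j$ with final cost shares. *)

theory Defs
  imports Complex_Main
begin

text \<open>Declared valuations b :: nat => nat set => real (player index, bundle),
  item cost functions c :: nat => nat set => real (item index, set of players).\<close>

definition players :: "nat \<Rightarrow> nat set" where "players n = {1..n}"
definition items :: "nat \<Rightarrow> nat set" where "items m = {1..m}"

definition nondecreasing_on :: "'a set \<Rightarrow> ('a set \<Rightarrow> real) \<Rightarrow> bool" where
  "nondecreasing_on U f \<longleftrightarrow> (\<forall>S T. S \<subseteq> T \<and> T \<subseteq> U \<longrightarrow> f S \<le> f T)"

definition symmetric_on :: "'a set \<Rightarrow> ('a set \<Rightarrow> real) \<Rightarrow> bool" where
  "symmetric_on U f \<longleftrightarrow> (\<forall>S T. S \<subseteq> U \<and> T \<subseteq> U \<and> card S = card T \<longrightarrow> f S = f T)"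

definition submodular_on :: "'a set \<Rightarrow> ('a set \<Rightarrow> real) \<Rightarrow> bool" where
  "submodular_on U f \<longleftrightarrow> (\<forall>S T x. S \<subseteq> T \<and> T \<subseteq> U \<and> x \<in> U \<and> x \<notin> T \<longrightarrow>
      f (insert x S) - f S \<ge> f (insert x T) - f T)"

definition avg_decreasing_on :: "real \<Rightarrow> 'a set \<Rightarrow> ('a set \<Rightarrow> real) \<Rightarrow> bool" where
  "avg_decreasing_on \<alpha> U c \<longleftrightarrow> (\<forall>S T. S \<noteq> {} \<and> S \<subseteq> T \<and> T \<subseteq> U \<longrightarrow>
      \<alpha> * (c S / real (card S)) \<ge> c T / real (card T))"

text \<open>State of IACSM: active set X, allocation A, sets T_j, cost shares chi_j.\<close>
record state =
  act :: "nat set"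
  alloc :: "nat \<Rightarrow> nat set"
  tset :: "nat \<Rightarrow> nat set"
  share :: "nat \<Rightarrow> real"

definition utility :: "(nat set \<Rightarrow> real) \<Rightarrow> (nat \<Rightarrow> real) \<Rightarrow> nat set \<Rightarrow> real" where
  "utility v chi S = v S - (\<Sum>j\<in>S. chi j)"

definition is_maximizer :: "nat set \<Rightarrow> (nat set \<Rightarrow> real) \<Rightarrow> (nat \<Rightarrow> real) \<Rightarrow> nat set \<Rightarrow> bool" where
  "is_maximizer M v chi S \<longleftrightarrow> S \<subseteq> M \<and> (\<forall>S'. S' \<subseteq> M \<longrightarrow> utility v chi S' \<le> utility v chi S)"

definition demand_size :: "nat set \<Rightarrow> (nat set \<Rightarrow> real) \<Rightarrow> (nat \<Rightarrow> real) \<Rightarrow> nat" where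
  "demand_size M v chi = Max (card ` {S. is_maximizer M v chi S})"

definition item_less :: "(nat \<Rightarrow> real) \<Rightarrow> nat \<Rightarrow> nat \<Rightarrow> bool" where
  "item_less chi j' j \<longleftrightarrow> chi j' < chi j \<or> (chi j' = chi j \<and> j' < j)"

definition cheapest :: "nat set \<Rightarrow> (nat \<Rightarrow> real) \<Rightarrow> nat \<Rightarrow> nat set" where
  "cheapest M chi k = {j \<in> M. card {j' \<in> M. item_less chi j' j} < k}"

definition demand :: "nat set \<Rightarrow> (nat \<Rightarrow> nat set \<Rightarrow> real) \<Rightarrow> (nat \<Rightarrow> real) \<Rightarrow> nat \<Rightarrow> nat set" where
  "demand M b chi i = cheapest M chi (demand_size M (b i) chi)"

definition selected :: "nat set \<Rightarrow> (nat \<Rightarrow> nat set \<Rightarrow> real) \<Rightarrow> state \<Rightarrow> nat" where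
  "selected M b s = (LEAST i. i \<in> act s \<and>
      (\<forall>i'\<in>act s. card (demand M b (share s) i) \<le> card (demand M b (share s) i')))"

definition iacsm_step :: "nat set \<Rightarrow> (nat \<Rightarrow> nat set \<Rightarrow> real) \<Rightarrow> (nat \<Rightarrow> nat set \<Rightarrow> real) \<Rightarrow> state \<Rightarrow> state" where
  "iacsm_step M b c s =
    (if act s = {} then s else
      (let i = selected M b s;
           Ai = demand M b (share s) i;
           T' = (\<lambda>j. if j \<in> M \<and> j \<notin> Ai then tset s j - {i} else tset s j)
       in \<lparr> act = act s - {i},
            alloc = (alloc s)(i := Ai),
            tset = T',
            share = (\<lambda>j. if j \<in> M \<and> j \<notin> Ai \<and> T' j \<noteq> {}
                         then max (share s j) (c j (T' j) / real (card (T' j)))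
                         else share s j) \<rparr>))"

definition iacsm_init :: "nat \<Rightarrow> (nat \<Rightarrow> nat set \<Rightarrow> real) \<Rightarrow> state" where
  "iacsm_init n c = \<lparr> act = players n, alloc = (\<lambda>_. {}), tset = (\<lambda>_. players n),
      share = (\<lambda>j. c j (players n) / real n) \<rparr>"

text \<open>Final state: the loop runs exactly n iterations (one player removed per iteration).\<close>
definition iacsm_final :: "nat \<Rightarrow> nat \<Rightarrow> (nat \<Rightarrow> nat set \<Rightarrow> real) \<Rightarrow> (nat \<Rightarrow> nat set \<Rightarrow> real) \<Rightarrow> state" where
  "iacsm_final n m b c = (iacsm_step (items m) b c ^^ n) (iacsm_init n c)"

definition iacsm_alloc :: "nat \<Rightarrow> nat \<Rightarrow> (nat \<Rightarrow> nat set \<Rightarrow> real) \<Rightarrow> (nat \<Rightarrow> nat set \<Rightarrow> real) \<Rightarrow> nat \<Rightarrow> nat set" where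
  "iacsm_alloc n m b c = alloc (iacsm_final n m b c)"

definition iacsm_payment :: "nat \<Rightarrow> nat \<Rightarrow> (nat \<Rightarrow> nat set \<Rightarrow> real) \<Rightarrow> (nat \<Rightarrow> nat set \<Rightarrow> real) \<Rightarrow> nat \<Rightarrow> real" where
  "iacsm_payment n m b c i = (\<Sum>j\<in>iacsm_alloc n m b c i. share (iacsm_final n m b c) j)"

end

theory Submission
  imports Defs
begin

text \<open>Budget balance does not depend on the bids: it follows from an invariant on the cost
  shares alone. Throughout the run, every item j keeps its share \<chi>_j between the average cost
  c_j(T_j)/|T_j| of its current set T_j and \<alpha> times the average cost c_j(S)/|S| of every nonempty
  S \<subseteq> T_j. Initially this is \<alpha>-average-decreasingness for T_j = N. When T_j shrinks to T', the
  share is raised to at least c_j(T')/|T'|, and the upper bound survives because old shares obey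
  it on the smaller family of subsets while the new average obeys it by \<alpha>-average-decreasingness.
  Once all players are removed, T_j is the set of buyers of j, so |T_j| \<chi>_j lies between c_j(T_j)
  and \<alpha> c_j(T_j); summing over items gives the total payment by double counting.\<close>

definition share_bounded :: "real \<Rightarrow> (nat set \<Rightarrow> real) \<Rightarrow> nat set \<Rightarrow> real \<Rightarrow> bool" where
  "share_bounded \<alpha> f T \<chi> \<longleftrightarrow>
     (T \<noteq> {} \<longrightarrow> f T / real (card T) \<le> \<chi>) \<and>
     (\<forall>S. S \<noteq> {} \<and> S \<subseteq> T \<longrightarrow> \<chi> \<le> \<alpha> * (f S / real (card S)))"

definition iacsm_invariant :: "nat \<Rightarrow> nat \<Rightarrow> real \<Rightarrow> (nat \<Rightarrow> nat set \<Rightarrow> real) \<Rightarrow> state \<Rightarrow> bool" where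
  "iacsm_invariant n m \<alpha> c s \<longleftrightarrow> act s \<subseteq> players n \<and> (\<forall>i. alloc s i \<subseteq> items m) \<and>
     (\<forall>j\<in>items m. tset s j = {i\<in>players n. i \<in> act s \<or> j \<in> alloc s i}
        \<and> share_bounded \<alpha> (c j) (tset s j) (share s j))"

lemma share_bounded_remove:
  assumes "share_bounded \<alpha> f T \<chi>" and "T \<subseteq> U" and "avg_decreasing_on \<alpha> U f"
  shows "share_bounded \<alpha> f (T - {i})
    (if T - {i} \<noteq> {} then max \<chi> (f (T - {i}) / real (card (T - {i}))) else \<chi>)"
  unfolding share_bounded_def
proof (intro conjI allI impI)
  fix S assume S: "S \<noteq> {} \<and> S \<subseteq> T - {i}"
  then have "\<chi> \<le> \<alpha> * (f S / real (card S))"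
    using assms(1) unfolding share_bounded_def by blast
  moreover have "f (T - {i}) / real (card (T - {i})) \<le> \<alpha> * (f S / real (card S))"
    using assms(2,3) S unfolding avg_decreasing_on_def by blast
  ultimately show "(if T - {i} \<noteq> {} then max \<chi> (f (T - {i}) / real (card (T - {i}))) else \<chi>)
      \<le> \<alpha> * (f S / real (card S))" by simp
qed simp

lemma share_bounded_cost_bounds:
  assumes "share_bounded \<alpha> f T \<chi>" and "finite T" and "f {} = 0"
  shows "f T \<le> real (card T) * \<chi> \<and> real (card T) * \<chi> \<le> \<alpha> * f T"
proof (cases "T = {}")
  case False
  then have "real (card T) > 0" using assms(2) by (simp add: card_gt_0_iff)
  moreover have "f T / real (card T) \<le> \<chi>" and "\<chi> \<le> \<alpha> * (f T / real (card T))"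
    using assms(1) False unfolding share_bounded_def by auto
  ultimately show ?thesis by (simp add: field_simps)
qed (use assms(3) in simp)

lemma sum_sum_subsets_eq_sum_card:
  fixes f :: "'b \<Rightarrow> 'c::semiring_1"
  assumes "finite N" and "finite M" and "\<And>i. i \<in> N \<Longrightarrow> A i \<subseteq> M"
  shows "(\<Sum>i\<in>N. \<Sum>j\<in>A i. f j) = (\<Sum>j\<in>M. of_nat (card {i\<in>N. j \<in> A i}) * f j)"
proof -
  have "(\<Sum>i\<in>N. \<Sum>j\<in>A i. f j) = (\<Sum>i\<in>N. \<Sum>j\<in>M. if j \<in> A i then f j else 0)"
    using assms by (intro sum.cong[OF refl]) (simp add: sum.If_cases Int_absorb1 inf_commute)
  also have "\<dots> = (\<Sum>j\<in>M. \<Sum>i\<in>N. if j \<in> A i then f j else 0)"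
    by (rule sum.swap)
  also have "\<dots> = (\<Sum>j\<in>M. of_nat (card {i\<in>N. j \<in> A i}) * f j)"
    using assms(1) by (intro sum.cong[OF refl]) (simp add: sum.If_cases Int_def)
  finally show ?thesis .
qed

lemma selected_in_act:
  assumes "act s \<noteq> {}"
  shows "selected M b s \<in> act s"
proof -
  let ?size = "\<lambda>i. card (demand M b (share s) i)"
  obtain i where "i \<in> act s \<and> (\<forall>i'\<in>act s. ?size i \<le> ?size i')"
    using assms ex_has_least_nat[of "\<lambda>i. i \<in> act s" _ ?size] by blast
  from LeastI[of "\<lambda>i. i \<in> act s \<and> (\<forall>i'\<in>act s. ?size i \<le> ?size i')", OF this]
  show ?thesis unfolding selected_def by blast
qed

lemma demand_subset: "demand M b \<chi> i \<subseteq> M"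
  unfolding demand_def cheapest_def by auto

lemma act_iacsm_step: "act (iacsm_step M b c s) = act s - {selected M b s}"
  unfolding iacsm_step_def by (simp add: Let_def)

lemma act_iacsm_iterate_subset:
  "act ((iacsm_step M b c ^^ k) (iacsm_init n c)) \<subseteq> players n"
  by (induction k) (auto simp: act_iacsm_step iacsm_init_def)

lemma card_act_iacsm_iterate:
  "card (act ((iacsm_step M b c ^^ k) (iacsm_init n c))) = n - k"
proof (induction k)
  case 0
  show ?case by (simp add: iacsm_init_def players_def)
next
  case (Suc k)
  let ?s = "(iacsm_step M b c ^^ k) (iacsm_init n c)"
  show ?case
    using Suc.IH selected_in_act[of ?s M b]
    by (cases "act ?s = {}") (auto simp: act_iacsm_step card_Diff_singleton)
qed

lemma act_iacsm_final: "act (iacsm_final n m b c) = {}"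
proof -
  have "finite (act (iacsm_final n m b c))"
    unfolding iacsm_final_def
    by (rule finite_subset[OF act_iacsm_iterate_subset]) (simp add: players_def)
  moreover have "card (act (iacsm_final n m b c)) = 0"
    unfolding iacsm_final_def card_act_iacsm_iterate by simp
  ultimately show ?thesis by simp
qed

lemma iacsm_invariant_init:
  assumes "\<forall>j\<in>items m. avg_decreasing_on \<alpha> (players n) (c j)"
  shows "iacsm_invariant n m \<alpha> c (iacsm_init n c)"
proof -
  have "c j (players n) / real (card (players n)) \<le> \<alpha> * (c j S / real (card S))"
    if "j \<in> items m" "S \<noteq> {}" "S \<subseteq> players n" for j S
    using assms that unfolding avg_decreasing_on_def by blast
  moreover have "card (players n) = n" unfolding players_def by simp
  ultimately show ?thesis
    unfolding iacsm_invariant_def iacsm_init_def share_bounded_def by auto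
qed

lemma iacsm_invariant_step:
  assumes inv: "iacsm_invariant n m \<alpha> c s"
    and avg: "\<forall>j\<in>items m. avg_decreasing_on \<alpha> (players n) (c j)"
  shows "iacsm_invariant n m \<alpha> c (iacsm_step (items m) b c s)"
proof (cases "act s = {}")
  case True
  then show ?thesis using inv unfolding iacsm_step_def by simp
next
  case False
  define i where "i = selected (items m) b s"
  define Ai where "Ai = demand (items m) b (share s) i"
  define T' where "T' = (\<lambda>j. if j \<in> items m \<and> j \<notin> Ai then tset s j - {i} else tset s j)"
  define \<chi>' where "\<chi>' = (\<lambda>j. if j \<in> items m \<and> j \<notin> Ai \<and> T' j \<noteq> {}
      then max (share s j) (c j (T' j) / real (card (T' j))) else share s j)"
  have step: "iacsm_step (items m) b c s =
      \<lparr>act = act s - {i}, alloc = (alloc s)(i := Ai), tset = T', share = \<chi>'\<rparr>"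
    using False unfolding iacsm_step_def Let_def \<chi>'_def T'_def Ai_def i_def by simp
  have i_act: "i \<in> act s" unfolding i_def using selected_in_act[OF False] .
  have Ai_items: "Ai \<subseteq> items m" unfolding Ai_def by (rule demand_subset)
  have tset_new: "T' j = {k\<in>players n. k \<in> act s - {i} \<or> j \<in> ((alloc s)(i := Ai)) k}"
    if "j \<in> items m" for j
    using inv that i_act unfolding iacsm_invariant_def T'_def by auto
  have share_new: "share_bounded \<alpha> (c j) (T' j) (\<chi>' j)" if j: "j \<in> items m" for j
  proof (cases "j \<in> Ai")
    case True
    have "share_bounded \<alpha> (c j) (tset s j) (share s j)"
      using inv j unfolding iacsm_invariant_def by blast
    then show ?thesis using True unfolding T'_def \<chi>'_def by simp
  next
    case False
    have "tset s j \<subseteq> players n" and "share_bounded \<alpha> (c j) (tset s j) (share s j)"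
      using inv j unfolding iacsm_invariant_def by auto
    with avg j have "share_bounded \<alpha> (c j) (tset s j - {i})
        (if tset s j - {i} \<noteq> {} then max (share s j) (c j (tset s j - {i}) / real (card (tset s j - {i})))
         else share s j)"
      by (intro share_bounded_remove) auto
    then show ?thesis using False j unfolding T'_def \<chi>'_def by (simp split: if_splits)
  qed
  have "act s - {i} \<subseteq> players n" and "\<forall>k. ((alloc s)(i := Ai)) k \<subseteq> items m"
    using inv Ai_items unfolding iacsm_invariant_def by auto
  then show ?thesis
    unfolding step iacsm_invariant_def using tset_new share_new by simp
qed

lemma iacsm_invariant_iterate:
  assumes "\<forall>j\<in>items m. avg_decreasing_on \<alpha> (players n) (c j)"
  shows "iacsm_invariant n m \<alpha> c ((iacsm_step (items m) b c ^^ k) (iacsm_init n c))"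
  by (induction k) (simp_all add: assms iacsm_invariant_init iacsm_invariant_step)

theorem mainTheorem8:
  fixes n m :: nat and \<alpha> :: real
    and b :: "nat \<Rightarrow> nat set \<Rightarrow> real" and c :: "nat \<Rightarrow> nat set \<Rightarrow> real"
  assumes alpha: "\<alpha> \<ge> 1"
    and val_nonneg: "\<forall>i\<in>players n. \<forall>S\<subseteq>items m. b i S \<ge> 0"
    and val_mono: "\<forall>i\<in>players n. nondecreasing_on (items m) (b i)"
    and val_sym: "\<forall>i\<in>players n. symmetric_on (items m) (b i)"
    and val_sub: "\<forall>i\<in>players n. submodular_on (items m) (b i)"
    and cost_nonneg: "\<forall>j\<in>items m. \<forall>S\<subseteq>players n. c j S \<ge> 0"
    and cost_empty: "\<forall>j\<in>items m. c j {} = 0"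
    and cost_mono: "\<forall>j\<in>items m. nondecreasing_on (players n) (c j)"
    and cost_avg: "\<forall>j\<in>items m. avg_decreasing_on \<alpha> (players n) (c j)"
  shows "(\<Sum>j\<in>items m. c j {i\<in>players n. j \<in> iacsm_alloc n m b c i})
           \<le> (\<Sum>i\<in>players n. iacsm_payment n m b c i)
       \<and> (\<Sum>i\<in>players n. iacsm_payment n m b c i)
           \<le> \<alpha> * (\<Sum>j\<in>items m. c j {i\<in>players n. j \<in> iacsm_alloc n m b c i})"
proof -
  define s where "s = iacsm_final n m b c"
  define T where "T j = {i\<in>players n. j \<in> alloc s i}" for j
  have inv: "iacsm_invariant n m \<alpha> c s"
    unfolding s_def iacsm_final_def by (rule iacsm_invariant_iterate[OF cost_avg])
  have bounded: "share_bounded \<alpha> (c j) (T j) (share s j)" if "j \<in> items m" for j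
    using inv that act_iacsm_final unfolding iacsm_invariant_def T_def s_def by auto
  have fin_T: "finite (T j)" for j unfolding T_def players_def by simp
  have payments: "(\<Sum>i\<in>players n. iacsm_payment n m b c i) = (\<Sum>j\<in>items m. real (card (T j)) * share s j)"
    using inv unfolding iacsm_payment_def iacsm_alloc_def s_def[symmetric] T_def iacsm_invariant_def
    by (intro sum_sum_subsets_eq_sum_card) (auto simp: players_def items_def)
  have cost_bounds: "c j (T j) \<le> real (card (T j)) * share s j
      \<and> real (card (T j)) * share s j \<le> \<alpha> * c j (T j)" if "j \<in> items m" for j
    using share_bounded_cost_bounds[OF bounded fin_T] cost_empty that by blast
  have "(\<Sum>j\<in>items m. c j (T j)) \<le> (\<Sum>j\<in>items m. real (card (T j)) * share s j)"
    using cost_bounds by (intro sum_mono) blast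
  moreover have "(\<Sum>j\<in>items m. real (card (T j)) * share s j) \<le> \<alpha> * (\<Sum>j\<in>items m. c j (T j))"
    unfolding sum_distrib_left using cost_bounds by (intro sum_mono) blast
  ultimately show ?thesis
    unfolding payments iacsm_alloc_def s_def[symmetric] T_def by simp
qed

end
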